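(* Let $C>0$. Consider four sites $s\in\{1,2,3,4\}$ with scalar covariates $X_s=s$. The experimental sites are $\mathcal{S}_E=\{1,4\}$, the policy sites are $\mathcal{S}_P=\{2,3\}$, and at most $k=1$ site may be sampled, so the feasible sampling sets are $\mathcal{A}(1)=\{\emptyset,\{1\},\{4\}\}$. Let $\Theta$ be the set of vectors $(\tau_1,\tau_2,\tau_3,\tau_4)\in\mathbb{R}^4$ with $|\tau_s-\tau_t|\le C|s-t|$ for all $s,t$; equivalently, $\tau_s=\tau(s)$ for some $C$-Lipschitz $\tau:\mathbb{R}\to\mathbb{R}$. Signals are noiseless: if $\mathscr{S}$ is sampled, the policy maker observes exactly $(\tau_s)_{s\in\mathscr{S}}$. A treatment rule for $\mathscr{S}$ is a measurable map $T^{\mathscr{S}}$ from the observations to actions $(a_2,a_3)\in[0,1]^2$. The regret of actions $(a_2,a_3)$ is $\frac12\sum_{s\in\{2,3\}}\tau_s(\mathbf{1}\{\tau_s\ge0\}-a_s)$. A randomized design consists of a probability distribution $p$ on $\mathcal{A}(1)$ together with a treatment rule $T^{\mathscr{S}}$ for each $\mathscr{S}\in\mathcal{A}(1)$. Its worst-case regret is the supremum over $\tau\in\Theta$ of the $p$-expected regret; here the parameter $\tau$ is fixed before the sampled set is drawn. A purposive design is a randomized design in which $p$ is a point mass. Then: (1) the infimum of worst-case regret over all randomized designs equals $C/2$, and it is attained; (2) the infimum of worst-case regret over all purposive designs equals $3C/4$, and it is attained.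
   Context: This is a stylized example comparing randomized and purposive (nonrandom) selection of experimental sites under minimax regret. The adversarial parameter is chosen before the randomization over sampling sets is realized, and it is the same for all realizations of the sampled set. *)

theory Defs
  imports "HOL-Probability.Probability"
begin

definition sites :: "nat set" where "sites = {1,2,3,4}"

definition Theta :: "real \<Rightarrow> (nat \<Rightarrow> real) set" where
  "Theta C = {\<tau>. (\<forall>s\<in>sites. \<forall>t\<in>sites. \<bar>\<tau> s - \<tau> t\<bar> \<le> C * \<bar>real s - real t\<bar>)
                 \<and> (\<forall>s. s \<notin> sites \<longrightarrow> \<tau> s = 0)}"

definition feasible_sets :: "nat set set" where
  "feasible_sets = {{}, {1}, {4}}"

definition obs :: "nat set \<Rightarrow> (nat \<Rightarrow> real) \<Rightarrow> (nat \<Rightarrow> real)" where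
  "obs S \<tau> = restrict \<tau> S"

definition obs_space :: "nat set \<Rightarrow> (nat \<Rightarrow> real) measure" where
  "obs_space S = PiM S (\<lambda>_. borel)"

definition regret :: "(nat \<Rightarrow> real) \<Rightarrow> real \<times> real \<Rightarrow> real" where
  "regret \<tau> a = 1/2 * (\<tau> 2 * ((if \<tau> 2 \<ge> 0 then 1 else 0) - fst a)
                      + \<tau> 3 * ((if \<tau> 3 \<ge> 0 then 1 else 0) - snd a))"

type_synonym design = "nat set pmf \<times> (nat set \<Rightarrow> (nat \<Rightarrow> real) \<Rightarrow> real \<times> real)"

definition treatment_rule :: "nat set \<Rightarrow> ((nat \<Rightarrow> real) \<Rightarrow> real \<times> real) \<Rightarrow> bool" where
  "treatment_rule S T \<longleftrightarrow> T \<in> obs_space S \<rightarrow>\<^sub>M borel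
     \<and> (\<forall>x\<in>space (obs_space S). T x \<in> {0..1} \<times> {0..1})"

definition randomized_designs :: "design set" where
  "randomized_designs = {(p, T). set_pmf p \<subseteq> feasible_sets
       \<and> (\<forall>S\<in>feasible_sets. treatment_rule S (T S))}"

definition purposive_designs :: "design set" where
  "purposive_designs = {(p, T). (p, T) \<in> randomized_designs
       \<and> (\<exists>S\<in>feasible_sets. p = return_pmf S)}"

definition worst_case_regret :: "real \<Rightarrow> design \<Rightarrow> ereal" where
  "worst_case_regret C d = (SUP \<tau>\<in>Theta C.
     ereal (measure_pmf.expectation (fst d) (\<lambda>S. regret \<tau> (snd d S (obs S \<tau>)))))"

end

theory Submission
  imports Defs
begin

text \<open>
  Lower bounds: if \<open>\<tau>\<close> vanishes on every site that may be sampled, then \<open>\<tau>\<close> and \<open>-\<tau>\<close> produce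
  the same observations, so any design takes the same actions under both, and the two regrets
  add up to \<open>(\<bar>\<tau>\<^sub>2\<bar> + \<bar>\<tau>\<^sub>3\<bar>)/2\<close> whatever the actions are.  Taking \<open>\<tau> = C\<close> on the policy
  sites and \<open>0\<close> on the experimental ones gives \<open>C/2\<close> for every design; for a purposive design
  the line of slope \<open>C\<close> through the sampled site gives \<open>3C/4\<close>.

  Upper bounds: observing \<open>\<tau>\<^sub>j\<close> at distance \<open>\<delta>\<close> from a policy site, treat it with probability
  \<open>1/2 + \<tau>\<^sub>j / (2C\<delta>)\<close> clipped to \<open>[0,1]\<close>; the regret at that site is then at most \<open>C\<delta>/2\<close>,
  which yields \<open>3C/4\<close> for the purposive design sampling site 1.  Sampling site 1 or 4 with
  probability \<open>1/2\<close> each and treating both policy sites by the ramp of slope \<open>1/(2C)\<close> does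
  better, because the Lipschitz link between \<open>\<tau>\<^sub>2\<close> and \<open>\<tau>\<^sub>3\<close> prevents both sites from being
  hard simultaneously: the four site regrets add up to at most \<open>2C\<close>.
\<close>

definition site_regret :: "real \<Rightarrow> real \<Rightarrow> real" where
  "site_regret t a = t * ((if t \<ge> 0 then 1 else 0) - a)"

lemma regret_eq_site_regret:
  "regret \<tau> a = (site_regret (\<tau> 2) (fst a) + site_regret (\<tau> 3) (snd a)) / 2"
  unfolding regret_def site_regret_def by simp

lemma site_regret_uminus: "site_regret (- t) (1 - a) = site_regret t a"
  unfolding site_regret_def by (auto simp: algebra_simps)

lemma site_regret_add_uminus: "site_regret t a + site_regret (- t) a = \<bar>t\<bar>"
  unfolding site_regret_def by (auto simp: algebra_simps)

definition ramp :: "real \<Rightarrow> real \<Rightarrow> real" where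
  "ramp d x = max 0 (min 1 (1/2 + x / (2 * d)))"

lemma ramp_bounds: "0 \<le> ramp d x" "ramp d x \<le> 1"
  unfolding ramp_def by auto

lemma ramp_uminus: "ramp d (- x) = 1 - ramp d x"
  unfolding ramp_def by auto

lemma ramp_mono:
  assumes "d > 0" "x \<le> y"
  shows "ramp d x \<le> ramp d y"
proof -
  have "x / (2 * d) \<le> y / (2 * d)" using assms by (simp add: divide_right_mono)
  then show ?thesis unfolding ramp_def by linarith
qed

lemma one_minus_ramp_le:
  assumes "d > 0" "t \<ge> 0" "t - d \<le> x"
  shows "1 - ramp d x \<le> max 0 (1 - t / (2 * d))"
proof -
  have "ramp d (t - d) = min 1 (t / (2 * d))"
    using assms by (simp add: ramp_def diff_divide_distrib)
  then show ?thesis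
    using ramp_mono[OF assms(1,3)] by linarith
qed

lemma mult_shortfall_le:
  fixes d t :: real
  assumes "d > 0" "t \<ge> 0"
  shows "t * max 0 (1 - t / (2 * d)) \<le> d / 2"
proof (cases "t \<le> 2 * d")
  case True
  have "t * (1 - t / (2 * d)) = d / 2 - (t - d)^2 / (2 * d)"
    using assms by (simp add: field_simps power2_eq_square)
  also have "\<dots> \<le> d / 2" using assms by simp
  finally show ?thesis using True assms by (simp add: max_def field_simps)
next
  case False
  then show ?thesis using assms by (simp add: max_def field_simps)
qed

lemma site_regret_ramp_le:
  assumes d: "d > 0" and close: "\<bar>t - x\<bar> \<le> d"
  shows "site_regret t (ramp d x) \<le> d / 2"
proof -
  have nonneg: "site_regret t (ramp d x) \<le> d / 2" if "t \<ge> 0" "\<bar>t - x\<bar> \<le> d" for t x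
  proof -
    have "site_regret t (ramp d x) = t * (1 - ramp d x)"
      using that by (simp add: site_regret_def)
    also have "\<dots> \<le> t * max 0 (1 - t / (2 * d))"
      using that d by (intro mult_left_mono one_minus_ramp_le) auto
    also have "\<dots> \<le> d / 2" using mult_shortfall_le d that by blast
    finally show ?thesis .
  qed
  show ?thesis
  proof (cases "t \<ge> 0")
    case False
    then have "site_regret (- t) (ramp d (- x)) \<le> d / 2"
      using close by (intro nonneg) auto
    then show ?thesis by (simp add: ramp_uminus site_regret_uminus)
  qed (use nonneg close in auto)
qed

lemma shortfall_sum_le:
  fixes C x y :: real
  assumes C: "C > 0" and "x \<ge> 0" "y \<ge> 0" "\<bar>x - y\<bar> \<le> C"
  shows "(x + y) * (max 0 (1 - x / (2 * C)) + max 0 (1 - y / (2 * C))) \<le> 2 * C"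
proof -
  have ordered: "(x + y) * (max 0 (1 - x / (2 * C)) + max 0 (1 - y / (2 * C))) \<le> 2 * C"
    if "0 \<le> y" "y \<le> x" "x \<le> y + C" for x y
  proof (cases "x \<le> 2 * C")
    case True
    have "(x + y) * (max 0 (1 - x / (2 * C)) + max 0 (1 - y / (2 * C)))
        = 2 * C - (x + y - 2 * C)^2 / (2 * C)"
      using True that C by (simp add: max_def field_simps power2_eq_square)
    also have "\<dots> \<le> 2 * C" using C by simp
    finally show ?thesis .
  next
    case False
    show ?thesis
    proof (cases "y \<le> 2 * C")
      case True
      have "(x + y) * (max 0 (1 - x / (2 * C)) + max 0 (1 - y / (2 * C)))
          \<le> (2 * y + C) * (1 - y / (2 * C))"
        using False True that C by (intro mult_mono) (auto simp: max_def field_simps)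
      also have "\<dots> = C + 3/2 * y - y^2 / C"
        using C by (simp add: field_simps power2_eq_square)
      also have "\<dots> \<le> 2 * C"
      proof -
        have "C * y \<le> y^2" using False that C by (simp add: power2_eq_square)
        then have "y \<le> y^2 / C" using C by (simp add: field_simps)
        then show ?thesis using True by linarith
      qed
      finally show ?thesis .
    qed (use False C in \<open>auto simp: max_def field_simps\<close>)
  qed
  show ?thesis
  proof (cases "y \<le> x")
    case True then show ?thesis using ordered assms by auto
  next
    case False then show ?thesis using ordered[of x y] assms by (simp add: add.commute)
  qed
qed

lemma site_regret_pair_ramp_le:
  fixes C m n t2 t3 :: real
  assumes C: "C > 0" and "\<bar>t2 - m\<bar> \<le> C" "\<bar>t3 - t2\<bar> \<le> C" "\<bar>n - t3\<bar> \<le> C"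
  shows "site_regret t2 (ramp C m) + site_regret t3 (ramp C m)
       + site_regret t2 (ramp C n) + site_regret t3 (ramp C n) \<le> 2 * C"
proof -
  have nonneg: "site_regret t2 (ramp C m) + site_regret t3 (ramp C m)
       + site_regret t2 (ramp C n) + site_regret t3 (ramp C n) \<le> 2 * C"
    if t2: "t2 \<ge> 0" and "\<bar>t2 - m\<bar> \<le> C" "\<bar>t3 - t2\<bar> \<le> C" "\<bar>n - t3\<bar> \<le> C"
    for t2 t3 m n
  proof (cases "t3 \<ge> 0")
    case True
    have "1 - ramp C m \<le> max 0 (1 - t2 / (2 * C))" "1 - ramp C n \<le> max 0 (1 - t3 / (2 * C))"
      using that True C by (auto intro!: one_minus_ramp_le)
    then have "(t2 + t3) * ((1 - ramp C m) + (1 - ramp C n))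
        \<le> (t2 + t3) * (max 0 (1 - t2 / (2 * C)) + max 0 (1 - t3 / (2 * C)))"
      using t2 True by (intro mult_left_mono) auto
    also have "\<dots> \<le> 2 * C"
      using shortfall_sum_le C t2 True that(3) by (simp add: abs_minus_commute)
    finally show ?thesis using t2 True by (simp add: site_regret_def algebra_simps)
  next
    case False
    let ?w = "ramp C m + ramp C n"
    have "t2 * (2 - ?w) \<le> t2 * 2" "(- t3) * ?w \<le> (- t3) * 2"
      using t2 False ramp_bounds[of C m] ramp_bounds[of C n] by (intro mult_left_mono; simp)+
    moreover have "t2 - t3 \<le> C" using that(3) by linarith
    ultimately show ?thesis using t2 False by (simp add: site_regret_def algebra_simps)
  qed
  show ?thesis
  proof (cases "t2 \<ge> 0")
    case False
    \<comment> \<open>The sign flip \<open>\<tau> \<mapsto> -\<tau>\<close>, \<open>a \<mapsto> 1 - a\<close> preserves regret and maps ramps to ramps.\<close>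
    have "site_regret (- t2) (ramp C (- m)) + site_regret (- t3) (ramp C (- m))
        + site_regret (- t2) (ramp C (- n)) + site_regret (- t3) (ramp C (- n)) \<le> 2 * C"
      using False assms by (intro nonneg) auto
    then show ?thesis by (simp add: ramp_uminus site_regret_uminus)
  qed (use nonneg assms in blast)
qed

lemma regret_add_uminus: "regret \<tau> a + regret (\<lambda>s. - \<tau> s) a = (\<bar>\<tau> 2\<bar> + \<bar>\<tau> 3\<bar>) / 2"
  using site_regret_add_uminus[of "\<tau> 2" "fst a"] site_regret_add_uminus[of "\<tau> 3" "snd a"]
  by (simp add: regret_eq_site_regret field_simps)

lemma Theta_uminus: "\<tau> \<in> Theta C \<Longrightarrow> (\<lambda>s. - \<tau> s) \<in> Theta C"
  unfolding Theta_def by (auto simp: abs_minus_commute)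

lemma worst_case_regret_ge_unobserved:
  assumes d: "d \<in> randomized_designs" and \<tau>: "\<tau> \<in> Theta C"
    and unobserved: "\<And>S s. S \<in> set_pmf (fst d) \<Longrightarrow> s \<in> S \<Longrightarrow> \<tau> s = 0"
  shows "ereal ((\<bar>\<tau> 2\<bar> + \<bar>\<tau> 3\<bar>) / 4) \<le> worst_case_regret C d"
proof -
  obtain p T where d_eq: "d = (p, T)" by (cases d)
  have "finite (set_pmf p)"
    using d d_eq finite_subset by (auto simp: randomized_designs_def feasible_sets_def)
  then have integrable: "integrable p f" for f :: "nat set \<Rightarrow> real"
    by (rule integrable_measure_pmf_finite)
  let ?\<tau>' = "\<lambda>s. - \<tau> s"
  let ?E = "\<lambda>\<sigma>. measure_pmf.expectation p (\<lambda>S. regret \<sigma> (T S (obs S \<sigma>)))"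
  have same_obs: "obs S ?\<tau>' = obs S \<tau>" if "S \<in> set_pmf p" for S
    using unobserved[of S] that d_eq by (auto simp: obs_def)
  have "?E \<tau> + ?E ?\<tau>'
      = measure_pmf.expectation p (\<lambda>S. regret \<tau> (T S (obs S \<tau>)) + regret ?\<tau>' (T S (obs S ?\<tau>')))"
    by (rule Bochner_Integration.integral_add[symmetric]) (rule integrable)+
  also have "\<dots> = measure_pmf.expectation p (\<lambda>_. (\<bar>\<tau> 2\<bar> + \<bar>\<tau> 3\<bar>) / 2)"
    by (intro integral_cong_AE AE_pmfI) (simp_all add: same_obs regret_add_uminus)
  finally have "?E \<tau> + ?E ?\<tau>' = (\<bar>\<tau> 2\<bar> + \<bar>\<tau> 3\<bar>) / 2" by simp
  moreover have worst_ge: "ereal (?E \<sigma>) \<le> worst_case_regret C d" if "\<sigma> \<in> Theta C" for \<sigma>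
    unfolding worst_case_regret_def d_eq using that by (auto intro: SUP_upper2)
  ultimately consider "(\<bar>\<tau> 2\<bar> + \<bar>\<tau> 3\<bar>) / 4 \<le> ?E \<tau>" | "(\<bar>\<tau> 2\<bar> + \<bar>\<tau> 3\<bar>) / 4 \<le> ?E ?\<tau>'"
    by linarith
  then show ?thesis
    using worst_ge[OF \<tau>] worst_ge[OF Theta_uminus[OF \<tau>]]
    by cases (metis ereal_less_eq(3) order_trans)+
qed

definition bump :: "real \<Rightarrow> nat \<Rightarrow> real" where
  "bump C s = (if s \<in> {2, 3} then C else 0)"

definition slope :: "real \<Rightarrow> real \<Rightarrow> nat \<Rightarrow> real" where
  "slope C k s = (if s \<in> sites then C * (real s - k) else 0)"

lemma bump_in_Theta: "C \<ge> 0 \<Longrightarrow> bump C \<in> Theta C"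
  unfolding Theta_def bump_def sites_def by auto

lemma slope_in_Theta: "C \<ge> 0 \<Longrightarrow> slope C k \<in> Theta C"
  unfolding Theta_def slope_def by (auto simp: abs_mult right_diff_distrib[symmetric])

lemma worst_case_regret_randomized_ge:
  assumes "C > 0" "d \<in> randomized_designs"
  shows "ereal (C / 2) \<le> worst_case_regret C d"
proof -
  have "set_pmf (fst d) \<subseteq> feasible_sets"
    using assms(2) by (auto simp: randomized_designs_def)
  then have "ereal ((\<bar>bump C 2\<bar> + \<bar>bump C 3\<bar>) / 4) \<le> worst_case_regret C d"
    using assms by (intro worst_case_regret_ge_unobserved bump_in_Theta)
      (auto simp: feasible_sets_def bump_def)
  then show ?thesis using assms(1) by (simp add: bump_def)
qed

lemma worst_case_regret_purposive_ge:
  assumes C: "C > 0" and d: "d \<in> purposive_designs"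
  shows "ereal (3 * C / 4) \<le> worst_case_regret C d"
proof -
  obtain S where S: "S \<in> feasible_sets" and p: "fst d = return_pmf S" and
    "d \<in> randomized_designs"
    using d by (auto simp: purposive_designs_def)
  define j :: nat where "j = (if S = {4} then 4 else 1)"
  have "S \<subseteq> {j}" using S by (auto simp: j_def feasible_sets_def)
  then have "ereal ((\<bar>slope C j 2\<bar> + \<bar>slope C j 3\<bar>) / 4) \<le> worst_case_regret C d"
    using C \<open>d \<in> randomized_designs\<close>
    by (intro worst_case_regret_ge_unobserved slope_in_Theta) (auto simp: p slope_def)
  then show ?thesis using C by (cases "S = {4}") (simp_all add: slope_def j_def sites_def)
qed

definition ramp_rule :: "nat \<Rightarrow> real \<Rightarrow> real \<Rightarrow> (nat \<Rightarrow> real) \<Rightarrow> real \<times> real" where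
  "ramp_rule j d2 d3 x = (ramp d2 (x j), ramp d3 (x j))"

lemma ramp_measurable[measurable]: "ramp d \<in> borel_measurable borel"
  unfolding ramp_def by measurable

lemma treatment_rule_ramp_rule:
  assumes "j \<in> S"
  shows "treatment_rule S (ramp_rule j d2 d3)"
proof -
  have "(\<lambda>x. ramp e (x j)) \<in> borel_measurable (obs_space S)" for e
    unfolding obs_space_def using assms by measurable
  then have "ramp_rule j d2 d3 \<in> obs_space S \<rightarrow>\<^sub>M borel \<Otimes>\<^sub>M borel"
    unfolding ramp_rule_def by (intro measurable_Pair)
  then show ?thesis
    unfolding treatment_rule_def by (simp add: borel_prod ramp_rule_def ramp_bounds)
qed

lemma treatment_rule_const: "a \<in> {0..1} \<times> {0..1} \<Longrightarrow> treatment_rule S (\<lambda>_. a)"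
  unfolding treatment_rule_def by auto

definition randomized_rule :: "real \<Rightarrow> nat set \<Rightarrow> (nat \<Rightarrow> real) \<Rightarrow> real \<times> real" where
  "randomized_rule C S =
     (if S = {1} then ramp_rule 1 C C else if S = {4} then ramp_rule 4 C C else (\<lambda>_. (1/2, 1/2)))"

definition purposive_rule :: "real \<Rightarrow> nat set \<Rightarrow> (nat \<Rightarrow> real) \<Rightarrow> real \<times> real" where
  "purposive_rule C S = (if S = {1} then ramp_rule 1 C (2 * C) else (\<lambda>_. (1/2, 1/2)))"

definition optimal_randomized_design :: "real \<Rightarrow> design" where
  "optimal_randomized_design C = (pmf_of_set {{1}, {4}}, randomized_rule C)"

definition optimal_purposive_design :: "real \<Rightarrow> design" where
  "optimal_purposive_design C = (return_pmf {1}, purposive_rule C)"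

lemma optimal_randomized_design_in: "optimal_randomized_design C \<in> randomized_designs"
  unfolding randomized_designs_def optimal_randomized_design_def randomized_rule_def
  by (auto simp: feasible_sets_def intro: treatment_rule_ramp_rule treatment_rule_const)

lemma optimal_purposive_design_in: "optimal_purposive_design C \<in> purposive_designs"
  unfolding purposive_designs_def randomized_designs_def optimal_purposive_design_def
    purposive_rule_def
  by (auto simp: feasible_sets_def intro: treatment_rule_ramp_rule treatment_rule_const)

lemma Theta_neighbour_le:
  "\<tau> \<in> Theta C \<Longrightarrow> s \<in> sites \<Longrightarrow> t \<in> sites \<Longrightarrow> \<bar>\<tau> s - \<tau> t\<bar> \<le> C * \<bar>real s - real t\<bar>"
  unfolding Theta_def by blast

lemma worst_case_regret_optimal_randomized_design:
  assumes C: "C > 0"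
  shows "worst_case_regret C (optimal_randomized_design C) \<le> ereal (C / 2)"
  unfolding worst_case_regret_def optimal_randomized_design_def
proof (intro SUP_least, simp only: fst_conv snd_conv ereal_less_eq(3))
  fix \<tau> assume \<tau>: "\<tau> \<in> Theta C"
  have "\<bar>\<tau> 2 - \<tau> 1\<bar> \<le> C" "\<bar>\<tau> 3 - \<tau> 2\<bar> \<le> C" "\<bar>\<tau> 4 - \<tau> 3\<bar> \<le> C"
    using Theta_neighbour_le[OF \<tau>, of 2 1] Theta_neighbour_le[OF \<tau>, of 3 2]
      Theta_neighbour_le[OF \<tau>, of 4 3] by (simp_all add: sites_def)
  then have "site_regret (\<tau> 2) (ramp C (\<tau> 1)) + site_regret (\<tau> 3) (ramp C (\<tau> 1))
      + site_regret (\<tau> 2) (ramp C (\<tau> 4)) + site_regret (\<tau> 3) (ramp C (\<tau> 4)) \<le> 2 * C"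
    by (intro site_regret_pair_ramp_le C)
  then show "measure_pmf.expectation (pmf_of_set {{1}, {4}})
      (\<lambda>S. regret \<tau> (randomized_rule C S (obs S \<tau>))) \<le> C / 2"
    by (simp add: integral_pmf_of_set randomized_rule_def ramp_rule_def regret_eq_site_regret
        obs_def)
qed

lemma worst_case_regret_optimal_purposive_design:
  assumes C: "C > 0"
  shows "worst_case_regret C (optimal_purposive_design C) \<le> ereal (3 * C / 4)"
  unfolding worst_case_regret_def optimal_purposive_design_def
proof (intro SUP_least, simp only: fst_conv snd_conv ereal_less_eq(3))
  fix \<tau> assume \<tau>: "\<tau> \<in> Theta C"
  have "\<bar>\<tau> 2 - \<tau> 1\<bar> \<le> C" "\<bar>\<tau> 3 - \<tau> 1\<bar> \<le> 2 * C"
    using Theta_neighbour_le[OF \<tau>, of 2 1] Theta_neighbour_le[OF \<tau>, of 3 1]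
    by (simp_all add: sites_def)
  then have "site_regret (\<tau> 2) (ramp C (\<tau> 1)) \<le> C / 2"
    and "site_regret (\<tau> 3) (ramp (2 * C) (\<tau> 1)) \<le> 2 * C / 2"
    using C by (intro site_regret_ramp_le; simp)+
  then show "measure_pmf.expectation (return_pmf {1})
      (\<lambda>S. regret \<tau> (purposive_rule C S (obs S \<tau>))) \<le> 3 * C / 4"
    by (simp add: purposive_rule_def ramp_rule_def regret_eq_site_regret obs_def)
qed

lemma INF_eq_attained:
  fixes f :: "'a \<Rightarrow> 'b::complete_linorder"
  assumes "x \<in> A" "f x \<le> v" "\<And>y. y \<in> A \<Longrightarrow> v \<le> f y"
  shows "(INF y\<in>A. f y) = v \<and> (\<exists>y\<in>A. f y = v)"
  using assms by (metis INF_greatest INF_lower antisym order_trans)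

theorem lemmaB1:
  fixes C :: real
  assumes "C > 0"
  shows "(INF d\<in>randomized_designs. worst_case_regret C d) = ereal (C / 2)
       \<and> (\<exists>d\<in>randomized_designs. worst_case_regret C d = ereal (C / 2))
       \<and> (INF d\<in>purposive_designs. worst_case_regret C d) = ereal (3 * C / 4)
       \<and> (\<exists>d\<in>purposive_designs. worst_case_regret C d = ereal (3 * C / 4))"
proof -
  have "(INF d\<in>randomized_designs. worst_case_regret C d) = ereal (C / 2)
      \<and> (\<exists>d\<in>randomized_designs. worst_case_regret C d = ereal (C / 2))"
    by (rule INF_eq_attained[where x = "optimal_randomized_design C"])
      (use optimal_randomized_design_in worst_case_regret_optimal_randomized_design
        worst_case_regret_randomized_ge assms in auto)
  moreover have "(INF d\<in>purposive_designs. worst_case_regret C d) = ereal (3 * C / 4)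
      \<and> (\<exists>d\<in>purposive_designs. worst_case_regret C d = ereal (3 * C / 4))"
    by (rule INF_eq_attained[where x = "optimal_purposive_design C"])
      (use optimal_purposive_design_in worst_case_regret_optimal_purposive_design
        worst_case_regret_purposive_ge assms in auto)
  ultimately show ?thesis by blast
qed

end
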